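(* Consider any economy $\mathcal{E}$ (as in the context). If firm $f$ and worker $w$ form a top-top match in state $\theta$ (i.e. in market $\mathcal{M}(\theta)$, $w$ is $f$'s favorite worker among all workers and $f$ is $w$'s favorite firm among all firms), then $f$ and $w$ are matched to each other in state $\theta$ under every BNE (with truthfully reporting firms).
   Context: Matching market: $(F,W,U)$ with finite firms, finite workers, utilities of each firm from each worker and each worker from each firm; unmatched utility $0$; all preferences strict; all pairs mutually acceptable. An economy is $\mathcal{E}=(F,W,\{U(\theta)\}_{\theta\in\Theta},\Theta,\Psi)$ with finite state set $\Theta$, full-support prior $\Psi$, market $\mathcal{M}(\theta)=(F,W,U(\theta))$ in state $\theta$; workers' utilities are state-independent, firms' may depend on $\theta$; each $\mathcal{M}(\theta)$ has a unique stable matching. Game: state drawn by $\Psi$; firms observe it; each worker knows only his own preferences; all simultaneously submit rank-ordered lists of acceptable partners; firm-proposing Deferred Acceptance is run on the reports. Firms report truthfully; a worker's strategy is one list; a BNE is a profile in which each worker's list maximizes his expected utility under $\Psi$ given the others' strategies. *)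

theory Defs
  imports Complex_Main
begin

text \<open>Firms have type 'f, workers 'w, states 's.  uF s f w is firm f's utility from
  worker w in state s; uW w f is worker w's (state-independent) utility from firm f.
  Being unmatched gives utility 0.\<close>

definition is_matching :: "'f set \<Rightarrow> 'w set \<Rightarrow> ('f \<times> 'w) set \<Rightarrow> bool" where
  "is_matching F W M \<longleftrightarrow> M \<subseteq> F \<times> W \<and>
     (\<forall>f w w'. (f,w) \<in> M \<longrightarrow> (f,w') \<in> M \<longrightarrow> w = w') \<and>
     (\<forall>f f' w. (f,w) \<in> M \<longrightarrow> (f',w) \<in> M \<longrightarrow> f = f')"

definition blocking_pair ::
  "('f \<Rightarrow> 'w \<Rightarrow> real) \<Rightarrow> ('w \<Rightarrow> 'f \<Rightarrow> real) \<Rightarrow> ('f \<times> 'w) set \<Rightarrow> 'f \<Rightarrow> 'w \<Rightarrow> bool" where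
  "blocking_pair uf uw M f w \<longleftrightarrow> (f,w) \<notin> M \<and>
     uf f w > 0 \<and> (\<forall>w'. (f,w') \<in> M \<longrightarrow> uf f w > uf f w') \<and>
     uw w f > 0 \<and> (\<forall>f'. (f',w) \<in> M \<longrightarrow> uw w f > uw w f')"

definition stable ::
  "'f set \<Rightarrow> 'w set \<Rightarrow> ('f \<Rightarrow> 'w \<Rightarrow> real) \<Rightarrow> ('w \<Rightarrow> 'f \<Rightarrow> real) \<Rightarrow> ('f \<times> 'w) set \<Rightarrow> bool" where
  "stable F W uf uw M \<longleftrightarrow> is_matching F W M \<and>
     (\<forall>(f,w) \<in> M. uf f w \<ge> 0 \<and> uw w f \<ge> 0) \<and>
     (\<forall>f\<in>F. \<forall>w\<in>W. \<not> blocking_pair uf uw M f w)"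

definition economy ::
  "'f set \<Rightarrow> 'w set \<Rightarrow> 's set \<Rightarrow> ('s \<Rightarrow> real) \<Rightarrow> ('s \<Rightarrow> 'f \<Rightarrow> 'w \<Rightarrow> real) \<Rightarrow> ('w \<Rightarrow> 'f \<Rightarrow> real) \<Rightarrow> bool" where
  "economy F W \<Theta> \<Psi> uF uW \<longleftrightarrow>
     finite F \<and> finite W \<and> finite \<Theta> \<and>
     (\<forall>\<theta>\<in>\<Theta>. \<Psi> \<theta> > 0) \<and> (\<Sum>\<theta>\<in>\<Theta>. \<Psi> \<theta>) = 1 \<and>
     (\<forall>\<theta>\<in>\<Theta>. \<forall>f\<in>F. inj_on (uF \<theta> f) W) \<and>
     (\<forall>w\<in>W. inj_on (uW w) F) \<and>
     (\<forall>\<theta>\<in>\<Theta>. \<forall>f\<in>F. \<forall>w\<in>W. uF \<theta> f w > 0) \<and>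
     (\<forall>w\<in>W. \<forall>f\<in>F. uW w f > 0) \<and>
     (\<forall>\<theta>\<in>\<Theta>. \<exists>!M. stable F W (uF \<theta>) uW M)"

definition pref_list :: "('a \<Rightarrow> real) \<Rightarrow> 'a set \<Rightarrow> 'a list" where
  "pref_list u A = (THE l. distinct l \<and> set l = A \<and> sorted_wrt (\<lambda>a b. u a > u b) l)"

definition ranked_above :: "'a list \<Rightarrow> 'a \<Rightarrow> 'a \<Rightarrow> bool" where
  "ranked_above l a b \<longleftrightarrow> (\<exists>i j. i < j \<and> j < length l \<and> l ! i = a \<and> l ! j = b)"

text \<open>State k: k f is the number of rejections firm f has received, so f currently
  proposes to the (k f)-th entry of its list (if any).  In each round every worker
  keeps the best acceptable proposal among those currently addressed to her and rejects
  all others; rejected firms move on.\<close>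
definition proposal :: "('f \<Rightarrow> 'w list) \<Rightarrow> ('f \<Rightarrow> nat) \<Rightarrow> 'f \<Rightarrow> 'w option" where
  "proposal pf k f = (if k f < length (pf f) then Some (pf f ! k f) else None)"

definition rejected ::
  "'f set \<Rightarrow> ('f \<Rightarrow> 'w list) \<Rightarrow> ('w \<Rightarrow> 'f list) \<Rightarrow> ('f \<Rightarrow> nat) \<Rightarrow> 'f \<Rightarrow> bool" where
  "rejected F pf pw k f \<longleftrightarrow> (\<exists>w. proposal pf k f = Some w \<and>
      (f \<notin> set (pw w) \<or>
       (\<exists>g\<in>F. g \<noteq> f \<and> proposal pf k g = Some w \<and> g \<in> set (pw w) \<and> ranked_above (pw w) g f)))"

definition da_step ::
  "'f set \<Rightarrow> ('f \<Rightarrow> 'w list) \<Rightarrow> ('w \<Rightarrow> 'f list) \<Rightarrow> ('f \<Rightarrow> nat) \<Rightarrow> ('f \<Rightarrow> nat)" where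
  "da_step F pf pw k = (\<lambda>f. if f \<in> F \<and> rejected F pf pw k f then Suc (k f) else k f)"

text \<open>Each non-terminal round increases the total number of rejections, which is bounded
  by the total length of the firms' lists; so this many rounds reach the final state.\<close>
definition da_final ::
  "'f set \<Rightarrow> ('f \<Rightarrow> 'w list) \<Rightarrow> ('w \<Rightarrow> 'f list) \<Rightarrow> ('f \<Rightarrow> nat)" where
  "da_final F pf pw = (da_step F pf pw ^^ (\<Sum>f\<in>F. length (pf f))) (\<lambda>_. 0)"

definition DA :: "'f set \<Rightarrow> ('f \<Rightarrow> 'w list) \<Rightarrow> ('w \<Rightarrow> 'f list) \<Rightarrow> 'f \<Rightarrow> 'w option" where
  "DA F pf pw f = (if f \<in> F then proposal pf (da_final F pf pw) f else None)"

definition firm_lists :: "'w set \<Rightarrow> ('s \<Rightarrow> 'f \<Rightarrow> 'w \<Rightarrow> real) \<Rightarrow> 's \<Rightarrow> 'f \<Rightarrow> 'w list" where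
  "firm_lists W uF \<theta> f = pref_list (uF \<theta> f) W"

definition worker_strategy :: "'f set \<Rightarrow> 'f list \<Rightarrow> bool" where
  "worker_strategy F l \<longleftrightarrow> distinct l \<and> set l \<subseteq> F"

definition worker_payoff :: "'f set \<Rightarrow> ('w \<Rightarrow> 'f \<Rightarrow> real) \<Rightarrow> ('f \<Rightarrow> 'w option) \<Rightarrow> 'w \<Rightarrow> real" where
  "worker_payoff F uW \<mu> w =
     (if \<exists>f\<in>F. \<mu> f = Some w then uW w (THE f. f \<in> F \<and> \<mu> f = Some w) else 0)"

definition expected_payoff ::
  "'f set \<Rightarrow> 'w set \<Rightarrow> 's set \<Rightarrow> ('s \<Rightarrow> real) \<Rightarrow> ('s \<Rightarrow> 'f \<Rightarrow> 'w \<Rightarrow> real) \<Rightarrow> ('w \<Rightarrow> 'f \<Rightarrow> real)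
     \<Rightarrow> ('w \<Rightarrow> 'f list) \<Rightarrow> 'w \<Rightarrow> real" where
  "expected_payoff F W \<Theta> \<Psi> uF uW \<sigma> w =
     (\<Sum>\<theta>\<in>\<Theta>. \<Psi> \<theta> * worker_payoff F uW (DA F (firm_lists W uF \<theta>) \<sigma>) w)"

definition BNE ::
  "'f set \<Rightarrow> 'w set \<Rightarrow> 's set \<Rightarrow> ('s \<Rightarrow> real) \<Rightarrow> ('s \<Rightarrow> 'f \<Rightarrow> 'w \<Rightarrow> real) \<Rightarrow> ('w \<Rightarrow> 'f \<Rightarrow> real)
     \<Rightarrow> ('w \<Rightarrow> 'f list) \<Rightarrow> bool" where
  "BNE F W \<Theta> \<Psi> uF uW \<sigma> \<longleftrightarrow>
     (\<forall>w\<in>W. worker_strategy F (\<sigma> w)) \<and>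
     (\<forall>w\<in>W. \<forall>l. worker_strategy F l \<longrightarrow>
        expected_payoff F W \<Theta> \<Psi> uF uW (\<sigma>(w := l)) w \<le> expected_payoff F W \<Theta> \<Psi> uF uW \<sigma> w)"

end

theory Submission
  imports Defs
begin

(* Let w move f to the top of her list.  In every state, either f proposes to w at some
   round of deferred acceptance, after which w holds f until the end and gets her favourite
   firm, or f never proposes to w, and then the whole run is unchanged: w's list is only
   consulted to compare the proposals of the other firms, whose relative order is kept.
   So the deviation is weakly profitable in every state.  In state theta, w tops f's list,
   so f proposes to w in the first round and the deviation yields uW w f.  Since theta has
   positive probability, the equilibrium condition forces w to obtain uW w f in theta
   already, i.e. to be matched with f. *)

lemma pref_list_spec:
  assumes "finite A" and "inj_on u A"
  shows "distinct (pref_list u A) \<and> set (pref_list u A) = A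
    \<and> sorted_wrt (\<lambda>a b. u a > u b) (pref_list u A)"
proof -
  let ?P = "\<lambda>l. distinct l \<and> set l = A \<and> sorted_wrt (\<lambda>a b. u a > u b) l"
  interpret folding_insort_key "(\<le>)" "(<)" A "\<lambda>a. - u a"
    by unfold_locales (use assms(2) in \<open>auto simp: inj_on_def\<close>)
  obtain l where l: "sorted_wrt (<) (map (\<lambda>a. - u a) l)" "set l = A" "length l = card A"
    using finite_set_strict_sorted[OF order_refl assms(1)] by blast
  have "?P l"
    using l by (auto simp: sorted_wrt_map card_distinct)
  moreover have "l' = l" if "?P l'" for l'
  proof -
    have "map (\<lambda>a. - u a) l' = map (\<lambda>a. - u a) l"
      by (rule strict_sorted_equal) (use that l in \<open>auto simp: sorted_wrt_map\<close>)
    moreover have "inj_on (\<lambda>a. - u a) (set l' \<union> set l)"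
      using assms(2) that l by (auto simp: inj_on_def)
    ultimately show ?thesis
      using map_inj_on by blast
  qed
  ultimately have "\<exists>!l. ?P l" by blast
  from theI'[OF this] show ?thesis
    unfolding pref_list_def .
qed

lemma pref_list_eq_Cons_max:
  assumes "finite A" and "inj_on u A" and "a \<in> A" and "\<forall>b\<in>A. u b \<le> u a"
  shows "\<exists>xs. pref_list u A = a # xs"
proof -
  have spec: "set (pref_list u A) = A" "sorted_wrt (\<lambda>a b. u a > u b) (pref_list u A)"
    using pref_list_spec[OF assms(1,2)] by auto
  then obtain x xs where l: "pref_list u A = x # xs"
    using assms(3) by (cases "pref_list u A") auto
  have "x = a"
  proof (rule ccontr)
    assume "x \<noteq> a"
    then have "u x > u a"
      using spec l assms(3) by auto
    moreover have "x \<in> A"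
      using spec(1) l by auto
    ultimately show False
      using assms(4) by fastforce
  qed
  with l show ?thesis by blast
qed

lemma ranked_above_Nil [simp]: "\<not> ranked_above [] a b"
  by (simp add: ranked_above_def)

lemma ranked_above_Cons:
  "ranked_above (x # l) a b \<longleftrightarrow> (a = x \<and> b \<in> set l) \<or> ranked_above l a b"
proof
  assume "ranked_above (x # l) a b"
  then obtain i j where ij: "i < j" "j < Suc (length l)" "(x # l) ! i = a" "(x # l) ! j = b"
    unfolding ranked_above_def by auto
  then obtain j' where j: "j = Suc j'"
    by (cases j) auto
  show "(a = x \<and> b \<in> set l) \<or> ranked_above l a b"
  proof (cases i)
    case 0
    then show ?thesis
      using ij j by auto
  next
    case (Suc i')
    then show ?thesis
      using ij j unfolding ranked_above_def by auto
  qed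
next
  assume "(a = x \<and> b \<in> set l) \<or> ranked_above l a b"
  then show "ranked_above (x # l) a b"
  proof
    assume "a = x \<and> b \<in> set l"
    then obtain j where "j < length l" "l ! j = b"
      by (auto simp: in_set_conv_nth)
    then show ?thesis
      using \<open>a = x \<and> b \<in> set l\<close> unfolding ranked_above_def
      by (intro exI[of _ 0] exI[of _ "Suc j"]) auto
  next
    assume "ranked_above l a b"
    then obtain i j where "i < j" "j < length l" "l ! i = a" "l ! j = b"
      unfolding ranked_above_def by blast
    then show ?thesis
      unfolding ranked_above_def by (intro exI[of _ "Suc i"] exI[of _ "Suc j"]) auto
  qed
qed

lemma ranked_above_in_set: "ranked_above l a b \<Longrightarrow> a \<in> set l \<and> b \<in> set l"
  by (induction l) (auto simp: ranked_above_Cons)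

lemma ranked_above_filter:
  assumes "P a" and "P b"
  shows "ranked_above (filter P l) a b \<longleftrightarrow> ranked_above l a b"
  using assms by (induction l) (auto simp: ranked_above_Cons)

lemma ranked_above_total:
  assumes "a \<in> set l" and "b \<in> set l" and "a \<noteq> b"
  shows "ranked_above l a b \<or> ranked_above l b a"
  using assms by (induction l) (auto simp: ranked_above_Cons)

definition move_to_front :: "'a \<Rightarrow> 'a list \<Rightarrow> 'a list" where
  "move_to_front a l = a # filter (\<lambda>x. x \<noteq> a) l"

lemma set_move_to_front [simp]: "set (move_to_front a l) = insert a (set l)"
  by (auto simp: move_to_front_def)

lemma distinct_move_to_front: "distinct l \<Longrightarrow> distinct (move_to_front a l)"
  by (simp add: move_to_front_def)

lemma ranked_above_move_to_front:
  assumes "b \<noteq> a" and "c \<noteq> a"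
  shows "ranked_above (move_to_front a l) b c \<longleftrightarrow> ranked_above l b c"
  using assms by (simp add: move_to_front_def ranked_above_Cons ranked_above_filter)

lemma not_ranked_above_move_to_front: "\<not> ranked_above (move_to_front a l) b a"
  by (auto simp: move_to_front_def ranked_above_Cons dest: ranked_above_in_set)

lemma funpow_fixpoint_of_inflationary_bounded:
  fixes s :: "('a \<Rightarrow> nat) \<Rightarrow> 'a \<Rightarrow> nat" and b :: "'a \<Rightarrow> nat"
  assumes "finite F"
    and inflationary: "\<And>k g. k g \<le> s k g"
    and supported: "\<And>k g. g \<notin> F \<Longrightarrow> s k g = k g"
    and bounded: "\<And>k g. (\<forall>g\<in>F. k g \<le> b g) \<Longrightarrow> g \<in> F \<Longrightarrow> s k g \<le> b g"
  defines "N \<equiv> \<Sum>g\<in>F. b g"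
  shows "s ((s ^^ N) (\<lambda>_. 0)) = (s ^^ N) (\<lambda>_. 0)"
proof (rule ccontr)
  let ?k = "\<lambda>n. (s ^^ n) (\<lambda>_. 0)"
  have sum_increases: "sum k F < sum (s k) F" if "s k \<noteq> k" for k
  proof -
    obtain g where "s k g \<noteq> k g"
      using \<open>s k \<noteq> k\<close> by auto
    then have "g \<in> F" and "k g < s k g"
      using supported inflationary[of k g] by (auto simp: order_less_le)
    then show ?thesis
      using inflationary by (intro sum_strict_mono_ex1[OF \<open>finite F\<close>]) auto
  qed
  have fixpoint_persists: "?k m = ?k n" if "s (?k n) = ?k n" and "n \<le> m" for n m
    using that(2) by (induction m rule: dec_induct) (simp_all add: that(1))
  assume not_fixed: "s (?k N) \<noteq> ?k N"
  have "n \<le> sum (?k n) F" if "n \<le> Suc N" for n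
    using that
  proof (induction n)
    case (Suc n)
    have "s (?k n) \<noteq> ?k n"
      using fixpoint_persists[of n N] not_fixed Suc.prems by auto
    with Suc show ?case
      using sum_increases[of "?k n"] by simp
  qed simp
  then have "Suc N \<le> sum (?k (Suc N)) F"
    by blast
  moreover have "\<forall>g\<in>F. ?k n g \<le> b g" for n
    by (induction n) (simp_all add: bounded)
  then have "sum (?k (Suc N)) F \<le> N"
    unfolding N_def by (intro sum_mono) blast
  ultimately show False
    by simp
qed

lemma da_final_fixpoint:
  assumes "finite F"
  shows "da_step F pf pw (da_final F pf pw) = da_final F pf pw"
  unfolding da_final_def
proof (rule funpow_fixpoint_of_inflationary_bounded[OF assms])
  fix k g
  show "k g \<le> da_step F pf pw k g"
    by (simp add: da_step_def)
  show "g \<notin> F \<Longrightarrow> da_step F pf pw k g = k g"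
    by (simp add: da_step_def)
  show "da_step F pf pw k g \<le> length (pf g)" if "\<forall>g\<in>F. k g \<le> length (pf g)" and "g \<in> F"
    using that by (auto simp: da_step_def rejected_def proposal_def)
qed

lemma not_rejected_da_final:
  assumes "finite F" and "g \<in> F"
  shows "\<not> rejected F pf pw (da_final F pf pw) g"
  using fun_cong[OF da_final_fixpoint[OF assms(1), of pf pw], of g] assms(2)
  by (auto simp: da_step_def split: if_splits)

lemma DA_inj:
  assumes "finite F" and "g \<in> F" and "g' \<in> F"
    and "DA F pf pw g = Some v" and "DA F pf pw g' = Some v"
  shows "g = g'"
proof (rule ccontr)
  let ?k = "da_final F pf pw"
  assume "g \<noteq> g'"
  have "proposal pf ?k g = Some v" and "proposal pf ?k g' = Some v"
    using assms by (auto simp: DA_def)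
  moreover note not_rejected_da_final[OF assms(1,2), of pf pw]
    not_rejected_da_final[OF assms(1,3), of pf pw]
  ultimately have "g \<in> set (pw v)" "g' \<in> set (pw v)"
    "\<not> ranked_above (pw v) g g'" "\<not> ranked_above (pw v) g' g"
    using assms(2,3) \<open>g \<noteq> g'\<close> unfolding rejected_def by auto
  then show False
    using ranked_above_total \<open>g \<noteq> g'\<close> by metis
qed

lemma worker_payoff_DA:
  assumes "finite F" and "g \<in> F" and "DA F pf pw g = Some w"
  shows "worker_payoff F uW (DA F pf pw) w = uW w g"
proof -
  have "(THE g'. g' \<in> F \<and> DA F pf pw g' = Some w) = g"
  proof (rule the_equality)
    show "g \<in> F \<and> DA F pf pw g = Some w"
      using assms(2,3) ..
    show "g' = g" if "g' \<in> F \<and> DA F pf pw g' = Some w" for g'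
      using DA_inj[OF assms(1) _ assms(2) _ assms(3)] that by blast
  qed
  then show ?thesis
    using assms unfolding worker_payoff_def by auto
qed

lemma worker_payoff_DA_le:
  assumes "finite F" and "\<forall>g\<in>F. uW w g \<le> c" and "c \<ge> 0"
  shows "worker_payoff F uW (DA F pf pw) w \<le> c"
proof (cases "\<exists>g\<in>F. DA F pf pw g = Some w")
  case True
  then obtain g where "g \<in> F" "DA F pf pw g = Some w"
    by blast
  then show ?thesis
    using worker_payoff_DA[OF assms(1)] assms(2) by fastforce
next
  case False
  then show ?thesis
    using assms(3) unfolding worker_payoff_def by auto
qed

lemma rejected_move_to_front:
  assumes "proposal pf k f \<noteq> Some w"
  shows "rejected F pf (pw(w := move_to_front f (pw w))) k g = rejected F pf pw k g"
proof (cases "proposal pf k g = Some w")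
  case True
  have "h \<noteq> f" if "proposal pf k h = Some w" for h
    using that assms by auto
  with True show ?thesis
    unfolding rejected_def by (auto simp: ranked_above_move_to_front)
next
  case False
  then show ?thesis
    by (auto simp: rejected_def)
qed

lemma da_step_move_to_front:
  assumes "proposal pf k f \<noteq> Some w"
  shows "da_step F pf (pw(w := move_to_front f (pw w))) k = da_step F pf pw k"
  unfolding da_step_def by (simp only: rejected_move_to_front[OF assms])

lemma funpow_da_step_move_to_front:
  fixes pw :: "'w \<Rightarrow> 'f list" and w :: 'w and f :: 'f
  defines "pw' \<equiv> pw(w := move_to_front f (pw w))"
  assumes "\<forall>m<n. proposal pf ((da_step F pf pw' ^^ m) k) f \<noteq> Some w"
  shows "(da_step F pf pw' ^^ n) k = (da_step F pf pw ^^ n) k"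
  using assms(2)
proof (induction n)
  case (Suc n)
  have "proposal pf ((da_step F pf pw' ^^ n) k) f \<noteq> Some w"
    using Suc.prems by blast
  moreover have "(da_step F pf pw' ^^ n) k = (da_step F pf pw ^^ n) k"
    using Suc by simp
  ultimately show ?case
    using da_step_move_to_front[of pf _ f w F pw] by (simp add: pw'_def[symmetric])
qed simp

lemma proposal_funpow_da_step_top:
  assumes "proposal pf ((da_step F pf pw ^^ m) k) f = Some w" and "pw w = move_to_front f l"
    and "m \<le> n"
  shows "proposal pf ((da_step F pf pw ^^ n) k) f = Some w"
  using assms(3)
proof (induction n rule: dec_induct)
  case (step n)
  let ?k = "(da_step F pf pw ^^ n) k"
  have "\<not> rejected F pf pw ?k f"
    using step.IH assms(2) not_ranked_above_move_to_front unfolding rejected_def by fastforce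
  then have "da_step F pf pw ?k f = ?k f"
    by (simp add: da_step_def)
  with step.IH show ?case
    by (simp add: proposal_def split: if_splits)
qed (use assms(1) in simp)

lemma DA_move_to_front_cases:
  assumes "f \<in> F"
  obtains "DA F pf (pw(w := move_to_front f (pw w))) f = Some w"
    | "DA F pf (pw(w := move_to_front f (pw w))) = DA F pf pw"
proof -
  let ?pw' = "pw(w := move_to_front f (pw w))" and ?N = "\<Sum>g\<in>F. length (pf g)"
  let ?k = "\<lambda>m. (da_step F pf ?pw' ^^ m) (\<lambda>_. 0)"
  show ?thesis
  proof (cases "\<exists>m\<le>?N. proposal pf (?k m) f = Some w")
    case True
    then obtain m where m: "m \<le> ?N" "proposal pf (?k m) f = Some w"
      by blast
    have "proposal pf (?k ?N) f = Some w"
      by (rule proposal_funpow_da_step_top[OF m(2) _ m(1)]) simp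
    then show ?thesis
      using that(1) assms by (simp add: DA_def da_final_def)
  next
    case False
    then have "\<forall>m<?N. proposal pf (?k m) f \<noteq> Some w"
      by simp
    then have "da_final F pf ?pw' = da_final F pf pw"
      unfolding da_final_def by (rule funpow_da_step_move_to_front)
    then have "DA F pf ?pw' = DA F pf pw"
      by (intro ext) (simp add: DA_def)
    then show ?thesis
      by (rule that(2))
  qed
qed

lemma DA_move_to_front_first_choice:
  assumes "f \<in> F" and "pf f = w # ws"
  shows "DA F pf (pw(w := move_to_front f (pw w))) f = Some w"
proof -
  let ?pw' = "pw(w := move_to_front f (pw w))"
  have "proposal pf ((da_step F pf ?pw' ^^ 0) (\<lambda>_. 0)) f = Some w"
    using assms(2) by (simp add: proposal_def)
  then have "proposal pf (da_final F pf ?pw') f = Some w"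
    unfolding da_final_def by (rule proposal_funpow_da_step_top) simp_all
  then show ?thesis
    using assms(1) by (simp add: DA_def)
qed

lemma worker_payoff_move_to_front_ge:
  assumes "finite F" and "f \<in> F" and "\<forall>g\<in>F. uW w g \<le> uW w f" and "uW w f \<ge> 0"
  shows "worker_payoff F uW (DA F pf pw) w
    \<le> worker_payoff F uW (DA F pf (pw(w := move_to_front f (pw w)))) w"
  using DA_move_to_front_cases[OF assms(2), where pf = pf and pw = pw and w = w]
proof cases
  case 1
  then have "worker_payoff F uW (DA F pf (pw(w := move_to_front f (pw w)))) w = uW w f"
    by (rule worker_payoff_DA[OF assms(1,2)])
  moreover have "worker_payoff F uW (DA F pf pw) w \<le> uW w f"
    using assms(1,3,4) by (rule worker_payoff_DA_le)
  ultimately show ?thesis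
    by simp
qed simp

lemma positive_weighted_sum_le_imp_eq:
  fixes \<Psi> p q :: "'s \<Rightarrow> real"
  assumes "finite \<Theta>" and "\<forall>t\<in>\<Theta>. \<Psi> t > 0" and "\<forall>t\<in>\<Theta>. p t \<le> q t"
    and "(\<Sum>t\<in>\<Theta>. \<Psi> t * q t) \<le> (\<Sum>t\<in>\<Theta>. \<Psi> t * p t)" and "\<theta> \<in> \<Theta>"
  shows "p \<theta> = q \<theta>"
proof (rule ccontr)
  assume "p \<theta> \<noteq> q \<theta>"
  then have "(\<Sum>t\<in>\<Theta>. \<Psi> t * p t) < (\<Sum>t\<in>\<Theta>. \<Psi> t * q t)"
    using assms by (intro sum_strict_mono_ex1) (auto intro!: mult_left_mono bexI[of _ \<theta>])
  with assms(4) show False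
    by simp
qed

lemma DA_eq_Some_of_worker_payoff_eq:
  assumes "finite F" and "inj_on (uW w) F" and "f \<in> F" and "uW w f \<noteq> 0"
    and "worker_payoff F uW (DA F pf pw) w = uW w f"
  shows "DA F pf pw f = Some w"
proof -
  obtain g where "g \<in> F" and g: "DA F pf pw g = Some w"
    using assms(4,5) unfolding worker_payoff_def by (auto split: if_splits)
  then have "uW w g = uW w f"
    using assms(5) worker_payoff_DA[OF assms(1) \<open>g \<in> F\<close> g] by simp
  then have "g = f"
    using assms(2,3) \<open>g \<in> F\<close> by (auto dest: inj_onD)
  with g show ?thesis
    by simp
qed

theorem lemma1:
  fixes F :: "'f set" and W :: "'w set" and \<Theta> :: "'s set" and \<Psi> :: "'s \<Rightarrow> real"
    and uF :: "'s \<Rightarrow> 'f \<Rightarrow> 'w \<Rightarrow> real" and uW :: "'w \<Rightarrow> 'f \<Rightarrow> real"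
    and \<sigma> :: "'w \<Rightarrow> 'f list" and \<theta> :: 's and f :: 'f and w :: 'w
  assumes econ: "economy F W \<Theta> \<Psi> uF uW"
    and state: "\<theta> \<in> \<Theta>" and firm: "f \<in> F" and worker: "w \<in> W"
    and top_f: "\<forall>w'\<in>W. uF \<theta> f w' \<le> uF \<theta> f w"
    and top_w: "\<forall>f'\<in>F. uW w f' \<le> uW w f"
    and eq: "BNE F W \<Theta> \<Psi> uF uW \<sigma>"
  shows "DA F (firm_lists W uF \<theta>) \<sigma> f = Some w"
proof -
  have fin: "finite F" "finite W" "finite \<Theta>" and \<Psi>_pos: "\<forall>t\<in>\<Theta>. \<Psi> t > 0"
    and "inj_on (uF \<theta> f) W" "inj_on (uW w) F" "uW w f > 0"
    using econ state firm worker unfolding economy_def by auto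
  define \<sigma>' where "\<sigma>' = \<sigma>(w := move_to_front f (\<sigma> w))"
  let ?payoff = "\<lambda>\<tau> t. worker_payoff F uW (DA F (firm_lists W uF t) \<tau>) w"
  obtain ws where "firm_lists W uF \<theta> f = w # ws"
    using pref_list_eq_Cons_max[OF fin(2) \<open>inj_on (uF \<theta> f) W\<close> worker top_f]
    unfolding firm_lists_def by blast
  then have "DA F (firm_lists W uF \<theta>) \<sigma>' f = Some w"
    unfolding \<sigma>'_def by (rule DA_move_to_front_first_choice[OF firm])
  then have deviation_top: "?payoff \<sigma>' \<theta> = uW w f"
    by (rule worker_payoff_DA[OF fin(1) firm])
  have "\<forall>t\<in>\<Theta>. ?payoff \<sigma> t \<le> ?payoff \<sigma>' t"
    using worker_payoff_move_to_front_ge[where uW = uW and w = w, OF fin(1) firm top_w]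
      \<open>uW w f > 0\<close>
    unfolding \<sigma>'_def by simp
  moreover have "worker_strategy F (move_to_front f (\<sigma> w))"
    using eq worker firm unfolding BNE_def worker_strategy_def
    by (auto intro: distinct_move_to_front)
  then have "(\<Sum>t\<in>\<Theta>. \<Psi> t * ?payoff \<sigma>' t) \<le> (\<Sum>t\<in>\<Theta>. \<Psi> t * ?payoff \<sigma> t)"
    using eq worker unfolding BNE_def expected_payoff_def \<sigma>'_def by blast
  ultimately have "?payoff \<sigma> \<theta> = ?payoff \<sigma>' \<theta>"
    by (rule positive_weighted_sum_le_imp_eq[OF fin(3) \<Psi>_pos _ _ state])
  with deviation_top \<open>uW w f > 0\<close> show ?thesis
    by (intro DA_eq_Some_of_worker_payoff_eq[where uW = uW, OF fin(1) \<open>inj_on (uW w) F\<close> firm])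
      simp_all
qed

end
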